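(* Let $n\ge1$, $V=\{0,1\}^n$, $\beta=\log_2(3/2)$, and let $(A,B,W)$ be a partition of $V$ with $|A|=2^{n-1}$. Then \[ |\nabla(A,B)| + n^\beta |W| \;\ge\; 2^{n-1}. \]
   Context: $V=\{0,1\}^n$ is the vertex set of the Hamming cube $Q_n$ (vertices adjacent iff they differ in exactly one coordinate). For disjoint $A,B\subseteq V$, $\nabla(A,B)$ is the set of pairs $(x,y)$ with $x\in A$, $y\in B$ and $x,y$ adjacent; so $|\nabla(A,B)|$ is the number of edges of $Q_n$ between $A$ and $B$. *)

theory Defs
  imports Complex_Main
begin

definition cube :: "nat \<Rightarrow> bool list set" where
  "cube n = {x. length x = n}"

definition hadj :: "bool list \<Rightarrow> bool list \<Rightarrow> bool" where
  "hadj x y \<longleftrightarrow> length x = length y \<and> card {i. i < length x \<and> x ! i \<noteq> y ! i} = 1"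

definition nabla :: "bool list set \<Rightarrow> bool list set \<Rightarrow> (bool list \<times> bool list) set" where
  "nabla A B = {(x, y). x \<in> A \<and> y \<in> B \<and> hadj x y}"

end

theory Submission
  imports Defs "HOL-Analysis.Analysis"
begin

text \<open>
Let \<open>h\<^sub>S(x)\<close> be the number of neighbours of \<open>x\<close> outside \<open>S \<subseteq> {0,1}\<^sup>n\<close>. The Kahn--Park
inequality \<open>\<Sum>\<^sub>x\<^sub>\<in>\<^sub>S h\<^sub>S(x)\<^sup>\<beta> \<ge> 2|S|(2\<^sup>n - |S|)/2\<^sup>n\<close> is proved by induction on \<open>n\<close>, splitting
the cube along the first coordinate into halves \<open>P\<close>, \<open>Q\<close> with \<open>|Q| \<le> |P|\<close>. On the larger half
\<open>P\<close> the out-degrees grow by one exactly at the vertices missing their partner in \<open>Q\<close>, and the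
gain must pay for the term \<open>(|P| - |Q|)\<^sup>2/2\<^sup>n\<^sup>-\<^sup>1\<close>. It is bounded below in two ways: crudely by
\<open>h\<^sup>\<beta>/2 + 1 \<le> (h+1)\<^sup>\<beta>\<close>, which suffices when the halves are very unbalanced, and otherwise by
Minkowski's inequality for the \<open>\<ell>\<^sup>\<gamma>\<close>-norm, \<open>\<gamma> = 1/\<beta>\<close>, applied to \<open>(h+1)\<^sup>\<beta> = \<parallel>(h\<^sup>\<beta>, 1)\<parallel>\<^sub>\<gamma>\<close>.
For the corollary take \<open>S = B \<union> W\<close>, half of the cube: the bound becomes \<open>2\<^sup>n\<^sup>-\<^sup>1\<close>, a vertex of \<open>B\<close>
contributes at most its number of edges to \<open>A\<close>, and a vertex of \<open>W\<close> at most \<open>n\<^sup>\<beta>\<close>.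
\<close>

definition \<beta> :: real where "\<beta> = log 2 (3/2)"
definition \<gamma> :: real where "\<gamma> = 1 / \<beta>"

lemma \<beta>_pos: "0 < \<beta>" and \<beta>_le_1: "\<beta> \<le> 1"
  unfolding \<beta>_def by simp_all

lemma \<beta>_ge_half: "1/2 \<le> \<beta>"
proof -
  have "sqrt 2 \<le> (3/2::real)"
    by (rule power2_le_imp_le) (auto simp: power2_eq_square)
  then show ?thesis unfolding \<beta>_def by (subst le_log_iff) (auto simp: powr_half_sqrt)
qed

lemma two_powr_\<beta>: "2 powr \<beta> = 3/2"
  unfolding \<beta>_def by simp

lemma \<gamma>_ge_1: "1 \<le> \<gamma>" and \<gamma>_le_2: "\<gamma> \<le> 2"
  using \<beta>_pos \<beta>_le_1 \<beta>_ge_half unfolding \<gamma>_def by (simp_all add: field_simps)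

lemma \<beta>_mult_\<gamma>: "\<beta> * \<gamma> = 1"
  using \<beta>_pos unfolding \<gamma>_def by simp

lemma one_div_\<gamma>: "1 / \<gamma> = \<beta>"
  unfolding \<gamma>_def by simp

lemma three_halves_powr_\<gamma>: "(3/2) powr \<gamma> = 2"
  by (metis two_powr_\<beta> powr_powr \<beta>_mult_\<gamma> powr_one zero_le_numeral)

lemma powr_\<beta>_\<gamma>: "0 \<le> x \<Longrightarrow> (x powr \<beta>) powr \<gamma> = x"
  and powr_\<gamma>_\<beta>: "0 \<le> x \<Longrightarrow> (x powr \<gamma>) powr \<beta> = x"
  by (simp_all add: powr_powr \<beta>_mult_\<gamma> mult.commute[of \<gamma>])

lemma nat_powr_\<beta>_le: "real k powr \<beta> \<le> real k"
  using powr_le_one_le[of "real k" \<beta>] powr_mono[of \<beta> 1 "real k"] \<beta>_pos \<beta>_le_1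
  by (cases "k = 0") auto

lemma powr_convex_comb:
  fixes r x y t :: real
  assumes "1 \<le> r" "0 \<le> x" "0 \<le> y" "0 \<le> t" "t \<le> 1"
  shows "((1 - t) * x + t * y) powr r \<le> (1 - t) * x powr r + t * y powr r"
proof -
  have scale: "(s * z) powr r \<le> s * z powr r" if "0 \<le> s" "s \<le> 1" "0 \<le> z" for s z :: real
  proof -
    have "s powr r \<le> s"
      using that assms(1) powr_le_one_le[of s r] by (cases "s = 0") auto
    then show ?thesis
      using that by (simp add: powr_mult mult_right_mono)
  qed
  consider "x = 0" | "y = 0" | "0 < x" "0 < y" using assms by linarith
  then show ?thesis
  proof cases
    case 1
    then show ?thesis using scale[of t y] assms by simp
  next
    case 2
    then show ?thesis using scale[of "1 - t" x] assms by simp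
  next
    case 3
    then show ?thesis using convex_onD[OF powr_convex[OF assms(1)], of t x y] assms by simp
  qed
qed

definition pnorm2 :: "real \<Rightarrow> real \<Rightarrow> real \<Rightarrow> real" where
  "pnorm2 r a b = (a powr r + b powr r) powr (1 / r)"

lemma pnorm2_nonneg: "0 \<le> pnorm2 r a b"
  unfolding pnorm2_def by simp

lemma pnorm2_powr: "0 < r \<Longrightarrow> pnorm2 r a b powr r = a powr r + b powr r"
  unfolding pnorm2_def by (simp add: powr_powr)

lemma pnorm2_zero_right: "0 < r \<Longrightarrow> 0 \<le> a \<Longrightarrow> pnorm2 r a 0 = a"
  unfolding pnorm2_def by (simp add: powr_powr)

lemma pnorm2_eq_0_iff: "0 < r \<Longrightarrow> 0 \<le> a \<Longrightarrow> 0 \<le> b \<Longrightarrow> pnorm2 r a b = 0 \<longleftrightarrow> a = 0 \<and> b = 0"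
  unfolding pnorm2_def by (auto simp: add_nonneg_eq_0_iff)

lemma pnorm2_mono:
  assumes "0 < r" "0 \<le> a" "0 \<le> b" "a \<le> a'" "b \<le> b'"
  shows "pnorm2 r a b \<le> pnorm2 r a' b'"
  unfolding pnorm2_def using assms by (intro powr_mono2 add_mono) auto

lemma pnorm2_triangle:
  assumes r: "1 \<le> r" and nonneg: "0 \<le> a" "0 \<le> b" "0 \<le> c" "0 \<le> e"
  shows "pnorm2 r (a + c) (b + e) \<le> pnorm2 r a b + pnorm2 r c e"
proof -
  define A C where "A = pnorm2 r a b" and "C = pnorm2 r c e"
  consider "A = 0" | "C = 0" | "0 < A" "0 < C"
    using pnorm2_nonneg[of r] unfolding A_def C_def by (metis less_eq_real_def)
  then show ?thesis
  proof cases
    case 1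
    then show ?thesis using r nonneg pnorm2_eq_0_iff[of r a b] unfolding A_def by simp
  next
    case 2
    then show ?thesis using r nonneg pnorm2_eq_0_iff[of r c e] unfolding C_def by simp
  next
    case 3
    define t where "t = C / (A + C)"
    have AC: "A + C \<noteq> 0" using 3 by simp
    have t: "0 \<le> t" "t \<le> 1" unfolding t_def using 3 by auto
    have conv: "((u + v) / (A + C)) powr r \<le> (1 - t) * (u / A) powr r + t * (v / C) powr r"
      if "0 \<le> u" "0 \<le> v" for u v
    proof -
      have "(u + v) / (A + C) = (1 - t) * (u / A) + t * (v / C)"
      proof -
        have "1 - t = A / (A + C)" unfolding t_def using AC by (simp add: field_simps)
        then show ?thesis using 3 unfolding t_def by (simp add: add_divide_distrib)
      qed
      then show ?thesis using powr_convex_comb[OF r, of "u / A" "v / C" t] that t 3 by simp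
    qed
    have "((a + c) powr r + (b + e) powr r) / (A + C) powr r
        = ((a + c) / (A + C)) powr r + ((b + e) / (A + C)) powr r"
      unfolding powr_divide by (rule add_divide_distrib)
    also have "\<dots> \<le> (1 - t) * ((a powr r + b powr r) / A powr r) + t * ((c powr r + e powr r) / C powr r)"
      using conv[of a c] conv[of b e] nonneg by (simp add: powr_divide add_divide_distrib algebra_simps)
    also have "\<dots> = 1"
      using 3 r by (simp add: A_def C_def pnorm2_powr[symmetric])
    finally have "(a + c) powr r + (b + e) powr r \<le> (A + C) powr r"
      using 3 by (simp add: divide_le_eq)
    then have "pnorm2 r (a + c) (b + e) \<le> ((A + C) powr r) powr (1 / r)"
      unfolding pnorm2_def using r by (intro powr_mono2) auto
    also have "\<dots> = A + C"
      using 3 r by (simp add: powr_powr)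
    finally show ?thesis unfolding A_def C_def .
  qed
qed

lemma pnorm2_sum_le:
  assumes "1 \<le> r" "finite P" "\<And>x. x \<in> P \<Longrightarrow> 0 \<le> f x" "\<And>x. x \<in> P \<Longrightarrow> 0 \<le> g x"
  shows "pnorm2 r (\<Sum>x\<in>P. f x) (\<Sum>x\<in>P. g x) \<le> (\<Sum>x\<in>P. pnorm2 r (f x) (g x))"
  using assms(2-)
proof (induction P rule: finite_induct)
  case empty
  then show ?case using assms(1) pnorm2_eq_0_iff[of r 0 0] by simp
next
  case (insert y F)
  have "pnorm2 r (\<Sum>x\<in>insert y F. f x) (\<Sum>x\<in>insert y F. g x)
      = pnorm2 r (f y + sum f F) (g y + sum g F)"
    using insert by simp
  also have "\<dots> \<le> pnorm2 r (f y) (g y) + pnorm2 r (sum f F) (sum g F)"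
    using insert by (intro pnorm2_triangle assms(1)) (auto intro: sum_nonneg)
  also have "\<dots> \<le> (\<Sum>x\<in>insert y F. pnorm2 r (f x) (g x))"
    using insert by simp
  finally show ?case .
qed

lemma le_pnorm2I:
  assumes "0 < r" "0 \<le> x" "x powr r \<le> a powr r + b powr r"
  shows "x \<le> pnorm2 r a b"
proof -
  have "x = (x powr r) powr (1 / r)" using assms by (simp add: powr_powr)
  also have "\<dots> \<le> pnorm2 r a b" unfolding pnorm2_def using assms by (intro powr_mono2) auto
  finally show ?thesis .
qed

text \<open>This is where \<open>2\<^sup>\<beta> = 3/2\<close> is used: convexity of \<open>t \<mapsto> t\<^sup>\<gamma>\<close> on \<open>[1, 3/2]\<close>, where
  \<open>(3/2)\<^sup>\<gamma> = 2\<close>.\<close>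
lemma pnorm2_\<gamma>_half_ge:
  fixes N e :: real
  assumes N: "0 < N" and e: "0 \<le> e" "e \<le> N / 2"
  shows "N / 2 + e\<^sup>2 / N \<le> pnorm2 \<gamma> (N / 2) e"
proof -
  define y where "y = (2 * e / N)\<^sup>2"
  have y: "0 \<le> y" "y \<le> 1" unfolding y_def using assms by (auto simp: power_le_one)
  have "(1 + y / 2) powr \<gamma> = ((1 - y) * 1 + y * (3/2)) powr \<gamma>"
    by (simp add: algebra_simps)
  also have "\<dots> \<le> (1 - y) * 1 powr \<gamma> + y * (3/2) powr \<gamma>"
    using y \<gamma>_ge_1 by (intro powr_convex_comb) auto
  also have "\<dots> = 1 + y"
    by (simp add: three_halves_powr_\<gamma>)
  also have "y \<le> y powr (\<gamma> / 2)"
    using powr_mono'[of "\<gamma> / 2" 1 y] y \<gamma>_le_2 by simp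
  also have "\<dots> = (2 * e / N) powr \<gamma>"
  proof -
    have "y = (2 * e / N) powr 2" unfolding y_def using assms by simp
    then show ?thesis by (simp add: powr_powr)
  qed
  finally have "(1 + y / 2) powr \<gamma> \<le> 1 + (2 * e / N) powr \<gamma>" by simp
  then have "(N / 2 * (1 + y / 2)) powr \<gamma> \<le> (N / 2) powr \<gamma> * (1 + (2 * e / N) powr \<gamma>)"
    using N y by (subst powr_mult) (auto intro: mult_left_mono)
  also have "\<dots> = (N / 2) powr \<gamma> + e powr \<gamma>"
    using N by (simp add: distrib_left powr_mult[symmetric])
  also have "N / 2 * (1 + y / 2) = N / 2 + e\<^sup>2 / N"
    using N by (simp add: y_def field_simps power2_eq_square)
  finally show ?thesis
    using N e \<gamma>_ge_1 by (intro le_pnorm2I) auto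
qed

lemma pnorm2_\<gamma>_ge:
  fixes N L e :: real
  assumes "0 < N" "0 \<le> L" "L \<le> N / 2" "0 \<le> e" "e \<le> N / 2"
  shows "L + e\<^sup>2 / N \<le> pnorm2 \<gamma> L e"
proof -
  have "N / 2 + e\<^sup>2 / N \<le> pnorm2 \<gamma> (L + (N / 2 - L)) (e + 0)"
    using pnorm2_\<gamma>_half_ge assms by simp
  also have "\<dots> \<le> pnorm2 \<gamma> L e + pnorm2 \<gamma> (N / 2 - L) 0"
    using assms \<gamma>_ge_1 by (intro pnorm2_triangle) auto
  also have "pnorm2 \<gamma> (N / 2 - L) 0 = N / 2 - L"
    using assms \<gamma>_ge_1 by (intro pnorm2_zero_right) auto
  finally show ?thesis by simp
qed

lemma four_powr_\<beta>: "4 powr \<beta> = 9/4"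
  using powr_mult[of 2 2 \<beta>] by (simp add: two_powr_\<beta>)

lemma three_powr_\<beta>_ge: "15/8 \<le> 3 powr \<beta>"
proof -
  have "(15/8) powr \<gamma> = ((1 - 1/2) * (3/2) + 1/2 * (3/2 * (3/2))) powr \<gamma>"
    by simp
  also have "\<dots> \<le> (1 - 1/2) * (3/2) powr \<gamma> + 1/2 * (3/2 * (3/2)) powr \<gamma>"
    using \<gamma>_ge_1 by (intro powr_convex_comb) auto
  also have "\<dots> = 3"
    by (simp only: powr_mult three_halves_powr_\<gamma>) simp
  finally have "((15/8) powr \<gamma>) powr \<beta> \<le> 3 powr \<beta>"
    using \<beta>_pos by (intro powr_mono2) auto
  then show ?thesis by (simp add: powr_\<gamma>_\<beta>)
qed

lemma nat_powr_\<beta>_Suc_ge: "real h powr \<beta> / 2 + 1 \<le> real (Suc h) powr \<beta>"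
proof -
  have mono: "real k powr \<beta> \<le> real m powr \<beta>" if "k \<le> m" for k m
    using that \<beta>_pos by (intro powr_mono2) auto
  consider "h = 0" | "h = 1" | "h = 2" | "h = 3" | "4 \<le> h" by linarith
  then show ?thesis
  proof cases
    case 3
    then show ?thesis using three_powr_\<beta>_ge by (simp add: two_powr_\<beta>)
  next
    case 4
    then show ?thesis using mono[of 3 4] by (simp add: four_powr_\<beta>)
  next
    case 5
    then show ?thesis using mono[of 4 h] mono[of h "Suc h"] by (simp add: four_powr_\<beta>)
  qed (simp_all add: two_powr_\<beta>)
qed

lemma powr_\<beta>_add_le_1_eq_pnorm2:
  assumes "d \<le> 1"
  shows "real (h + d) powr \<beta> = pnorm2 \<gamma> (real h powr \<beta>) (real d)"
proof -
  have "real d powr \<gamma> = real d" using assms by (cases d) auto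
  then show ?thesis unfolding pnorm2_def one_div_\<gamma> by (simp add: powr_\<beta>_\<gamma>)
qed

lemma sum_powr_\<beta>_add_ge_half:
  assumes "finite P" "\<And>x. x \<in> P \<Longrightarrow> d x \<le> 1"
  shows "(\<Sum>x\<in>P. real (h x) powr \<beta>) / 2 + (\<Sum>x\<in>P. real (d x)) \<le> (\<Sum>x\<in>P. real (h x + d x) powr \<beta>)"
proof -
  have "real (h x) powr \<beta> / 2 + real (d x) \<le> real (h x + d x) powr \<beta>" if "x \<in> P" for x
    using assms(2)[OF that] nat_powr_\<beta>_Suc_ge[of "h x"] by (cases "d x") auto
  then show ?thesis by (simp add: sum_divide_distrib sum.distrib[symmetric] sum_mono)
qed

lemma sum_powr_\<beta>_add_ge_pnorm2:
  assumes "finite P" "\<And>x. x \<in> P \<Longrightarrow> d x \<le> 1"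
  shows "pnorm2 \<gamma> (\<Sum>x\<in>P. real (h x) powr \<beta>) (\<Sum>x\<in>P. real (d x)) \<le> (\<Sum>x\<in>P. real (h x + d x) powr \<beta>)"
proof -
  have "pnorm2 \<gamma> (\<Sum>x\<in>P. real (h x) powr \<beta>) (\<Sum>x\<in>P. real (d x))
      \<le> (\<Sum>x\<in>P. pnorm2 \<gamma> (real (h x) powr \<beta>) (real (d x)))"
    using \<gamma>_ge_1 assms(1) by (rule pnorm2_sum_le) auto
  also have "\<dots> = (\<Sum>x\<in>P. real (h x + d x) powr \<beta>)"
    using assms(2) by (intro sum.cong refl powr_\<beta>_add_le_1_eq_pnorm2[symmetric]) auto
  finally show ?thesis .
qed

definition iso_profile :: "real \<Rightarrow> real \<Rightarrow> real" where
  "iso_profile N s = 2 * s * (N - s) / N"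

lemma iso_profile_double:
  "N \<noteq> 0 \<Longrightarrow> iso_profile (2 * N) (p + q) = iso_profile N p + iso_profile N q + (p - q)\<^sup>2 / N"
  unfolding iso_profile_def by (simp add: field_simps power2_eq_square)

lemma iso_profile_half: "N \<noteq> 0 \<Longrightarrow> iso_profile (2 * N) N = N"
  unfolding iso_profile_def by simp

lemma iso_profile_nonneg: "0 < N \<Longrightarrow> 0 \<le> s \<Longrightarrow> s \<le> N \<Longrightarrow> 0 \<le> iso_profile N s"
  unfolding iso_profile_def by simp

lemma iso_profile_le_half: "0 < N \<Longrightarrow> iso_profile N s \<le> N / 2"
  using zero_le_power2[of "N - 2 * s"]
  unfolding iso_profile_def by (simp add: divide_le_eq power2_eq_square algebra_simps)

lemma iso_profile_add_sq_le:
  assumes N: "0 < N" and e: "0 \<le> e" "e \<le> p" "p \<le> N" and X: "iso_profile N p \<le> X"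
    and T: "X / 2 + e \<le> T" "pnorm2 \<gamma> X e \<le> T"
  shows "iso_profile N p + e\<^sup>2 / N \<le> T"
proof (cases "e \<le> N / 2")
  case True
  have L: "0 \<le> iso_profile N p" "iso_profile N p \<le> N / 2"
    using N e iso_profile_nonneg[of N p] iso_profile_le_half[of N p] by auto
  then have "iso_profile N p + e\<^sup>2 / N \<le> pnorm2 \<gamma> (iso_profile N p) e"
    using N e True by (intro pnorm2_\<gamma>_ge) auto
  also have "\<dots> \<le> pnorm2 \<gamma> X e"
    using L X e \<gamma>_ge_1 by (intro pnorm2_mono) auto
  finally show ?thesis using T by linarith
next
  case False
  \<comment> \<open>\<open>s \<mapsto> s (N - s)\<close> decreases on \<open>[N/2, N]\<close>\<close>
  have "0 \<le> (p - e) * (p + e - N)"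
    using False e by (intro mult_nonneg_nonneg) auto
  then have "p * (N - p) / N \<le> e * (N - e) / N"
    using N by (intro divide_right_mono) (auto simp: algebra_simps)
  then have "iso_profile N p + e\<^sup>2 / N \<le> iso_profile N p / 2 + e"
    using N unfolding iso_profile_def by (simp add: field_simps power2_eq_square)
  then show ?thesis using X T by linarith
qed

lemma sum_powr_\<beta>_double_ge:
  fixes P Q :: "'a set" and hP hQ :: "'a \<Rightarrow> nat"
  assumes fin: "finite P" "finite Q" and N: "0 < N"
    and card: "card Q \<le> card P" "real (card P) \<le> N"
    and IH: "iso_profile N (real (card P)) \<le> (\<Sum>x\<in>P. real (hP x) powr \<beta>)"
            "iso_profile N (real (card Q)) \<le> (\<Sum>x\<in>Q. real (hQ x) powr \<beta>)"
  shows "iso_profile (2 * N) (real (card P + card Q))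
    \<le> (\<Sum>x\<in>P. real (hP x + of_bool (x \<notin> Q)) powr \<beta>) + (\<Sum>x\<in>Q. real (hQ x + of_bool (x \<notin> P)) powr \<beta>)"
proof -
  define X T e d where "X = (\<Sum>x\<in>P. real (hP x) powr \<beta>)"
    and "T = (\<Sum>x\<in>P. real (hP x + of_bool (x \<notin> Q)) powr \<beta>)"
    and "e = real (card P) - real (card Q)" and "d = (\<Sum>x\<in>P. real (of_bool (x \<notin> Q)))"
  have "card P - card Q \<le> card (P - Q)"
    using fin by (intro diff_card_le_card_Diff)
  moreover have "d = real (card (P - Q))"
    unfolding d_def using fin by (simp add: Diff_eq Compl_eq)
  ultimately have ed: "0 \<le> e" "e \<le> d" unfolding e_def using card by auto
  have "X / 2 + d \<le> T"
    unfolding X_def d_def T_def by (rule sum_powr_\<beta>_add_ge_half[OF fin(1)]) simp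
  moreover have "pnorm2 \<gamma> X e \<le> T"
  proof -
    have "pnorm2 \<gamma> X e \<le> pnorm2 \<gamma> X d"
      unfolding X_def using ed \<gamma>_ge_1 by (intro pnorm2_mono) (auto intro: sum_nonneg)
    also have "\<dots> \<le> T"
      unfolding X_def d_def T_def by (rule sum_powr_\<beta>_add_ge_pnorm2[OF fin(1)]) simp
    finally show ?thesis .
  qed
  ultimately have "iso_profile N (real (card P)) + e\<^sup>2 / N \<le> T"
    using ed card IH(1) unfolding X_def e_def by (intro iso_profile_add_sq_le[OF N]) auto
  moreover have "(\<Sum>x\<in>Q. real (hQ x) powr \<beta>) \<le> (\<Sum>x\<in>Q. real (hQ x + of_bool (x \<notin> P)) powr \<beta>)"
    using \<beta>_pos by (intro sum_mono powr_mono2) auto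
  ultimately show ?thesis
    using IH(2) N iso_profile_double[of N "card P" "card Q"] unfolding T_def e_def by simp
qed

definition flip :: "nat \<Rightarrow> bool list \<Rightarrow> bool list" where
  "flip i x = x[i := \<not> x ! i]"

definition out_degree :: "bool list set \<Rightarrow> bool list \<Rightarrow> nat" where
  "out_degree S x = card {i. i < length x \<and> flip i x \<notin> S}"

definition slice :: "bool \<Rightarrow> bool list set \<Rightarrow> bool list set" where
  "slice b S = {x. b # x \<in> S}"

lemma length_flip [simp]: "length (flip i x) = length x"
  by (simp add: flip_def)

lemma flip_Cons_0 [simp]: "flip 0 (b # x) = (\<not> b) # x"
  and flip_Cons_Suc [simp]: "flip (Suc i) (b # x) = b # flip i x"
  by (simp_all add: flip_def)

lemma hadj_flip: "i < length y \<Longrightarrow> hadj (flip i y) y"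
proof -
  assume i: "i < length y"
  then have "{j. j < length (flip i y) \<and> flip i y ! j \<noteq> y ! j} = {i}"
    by (auto simp: flip_def nth_list_update)
  then show ?thesis unfolding hadj_def by simp
qed

lemma flip_inj: "i < length y \<Longrightarrow> flip i y = flip j y \<Longrightarrow> i = j"
  by (metis flip_def nth_list_update_eq nth_list_update_neq)

lemma card_less_Suc_Collect:
  "card {i. i < Suc m \<and> P i} = of_bool (P 0) + card {i. i < m \<and> P (Suc i)}"
proof -
  have card_sum: "card {i. i < k \<and> Q i} = (\<Sum>i<k. of_bool (Q i))" for k :: nat and Q
    by (subst sum_of_bool_eq) (auto intro: arg_cong[where f = card])
  show ?thesis unfolding card_sum by (rule sum.lessThan_Suc_shift)
qed

lemma out_degree_Cons: "out_degree S (b # x) = out_degree (slice b S) x + of_bool (x \<notin> slice (\<not> b) S)"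
  unfolding out_degree_def slice_def by (simp add: card_less_Suc_Collect)

lemma out_degree_le_length: "out_degree S x \<le> length x"
  unfolding out_degree_def by (rule card_mono[where B = "{..<length x}", simplified]) auto

lemma cube_lists: "cube n = {xs. set xs \<subseteq> UNIV \<and> length xs = n}"
  unfolding cube_def by simp

lemma finite_cube: "finite (cube n)"
  unfolding cube_lists by (rule finite_lists_length_eq) simp

lemma card_cube: "card (cube n) = 2 ^ n"
  unfolding cube_lists by (subst card_lists_length_eq) simp_all

lemma slice_subset_cube: "S \<subseteq> cube (Suc n) \<Longrightarrow> slice b S \<subseteq> cube n"
  unfolding slice_def cube_def by auto

lemma sum_split_slices:
  assumes "S \<subseteq> cube (Suc n)"
  shows "(\<Sum>x\<in>S. f x) = (\<Sum>x\<in>slice False S. f (False # x)) + (\<Sum>x\<in>slice True S. f (True # x))"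
proof -
  have fin: "finite (slice b S)" for b
    using slice_subset_cube[OF assms] finite_cube finite_subset by blast
  have decomp: "S = Cons False ` slice False S \<union> Cons True ` slice True S"
  proof (intro set_eqI iffI)
    fix x assume "x \<in> S"
    moreover obtain b y where "x = b # y"
      using \<open>x \<in> S\<close> assms unfolding cube_def by (cases x) auto
    ultimately show "x \<in> Cons False ` slice False S \<union> Cons True ` slice True S"
      unfolding slice_def by (cases b) auto
  qed (auto simp: slice_def)
  have "(\<Sum>x\<in>S. f x) = (\<Sum>x\<in>Cons False ` slice False S \<union> Cons True ` slice True S. f x)"
    using decomp by (rule arg_cong)
  also have "\<dots> = (\<Sum>x\<in>Cons False ` slice False S. f x) + (\<Sum>x\<in>Cons True ` slice True S. f x)"
    using fin by (intro sum.union_disjoint) auto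
  finally show ?thesis by (simp add: sum.reindex)
qed

theorem sum_out_degree_powr_\<beta>_ge:
  "S \<subseteq> cube n \<Longrightarrow> iso_profile (2 ^ n) (real (card S)) \<le> (\<Sum>x\<in>S. real (out_degree S x) powr \<beta>)"
proof (induction n arbitrary: S)
  case 0
  then have "card S \<le> 1"
    using card_mono[OF finite_cube 0] card_cube[of 0] by simp
  then have "iso_profile (2 ^ 0) (real (card S)) \<le> 0"
    unfolding iso_profile_def by (cases "card S") auto
  also have "0 \<le> (\<Sum>x\<in>S. real (out_degree S x) powr \<beta>)"
    by (intro sum_nonneg) auto
  finally show ?case .
next
  case (Suc n)
  define S\<^sub>0 S\<^sub>1 where "S\<^sub>0 = slice False S" and "S\<^sub>1 = slice True S"
  have sub: "S\<^sub>0 \<subseteq> cube n" "S\<^sub>1 \<subseteq> cube n"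
    using slice_subset_cube[OF Suc.prems] unfolding S\<^sub>0_def S\<^sub>1_def by auto
  have fin: "finite S\<^sub>0" "finite S\<^sub>1"
    using sub finite_cube finite_subset by blast+
  have small: "real (card S\<^sub>0) \<le> 2 ^ n" "real (card S\<^sub>1) \<le> 2 ^ n"
    using card_mono[OF finite_cube sub(1)] card_mono[OF finite_cube sub(2)] card_cube
    by (simp_all add: of_nat_le_iff[symmetric])
  have card: "card S = card S\<^sub>0 + card S\<^sub>1"
    using sum_split_slices[OF Suc.prems, of "\<lambda>_. 1::nat"] unfolding S\<^sub>0_def S\<^sub>1_def by simp
  have sum: "(\<Sum>x\<in>S. real (out_degree S x) powr \<beta>)
    = (\<Sum>x\<in>S\<^sub>0. real (out_degree S\<^sub>0 x + of_bool (x \<notin> S\<^sub>1)) powr \<beta>)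
      + (\<Sum>x\<in>S\<^sub>1. real (out_degree S\<^sub>1 x + of_bool (x \<notin> S\<^sub>0)) powr \<beta>)"
    unfolding S\<^sub>0_def S\<^sub>1_def by (subst sum_split_slices[OF Suc.prems]) (simp add: out_degree_Cons)
  have IH: "iso_profile (2 ^ n) (real (card S\<^sub>0)) \<le> (\<Sum>x\<in>S\<^sub>0. real (out_degree S\<^sub>0 x) powr \<beta>)"
    "iso_profile (2 ^ n) (real (card S\<^sub>1)) \<le> (\<Sum>x\<in>S\<^sub>1. real (out_degree S\<^sub>1 x) powr \<beta>)"
    using Suc.IH sub by auto
  consider "card S\<^sub>1 \<le> card S\<^sub>0" | "card S\<^sub>0 \<le> card S\<^sub>1" by linarith
  then show ?case
  proof cases
    case 1
    show ?thesis
      using sum_powr_\<beta>_double_ge[OF fin _ 1 small(1) IH] by (simp add: card sum)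
  next
    case 2
    show ?thesis
      using sum_powr_\<beta>_double_ge[OF fin(2,1) _ 2 small(2) IH(2,1)] by (simp add: card sum add.commute)
  qed
qed

lemma sum_card_flips_le_card_nabla:
  assumes "finite A" "finite B"
  shows "(\<Sum>y\<in>B. card {i. i < length y \<and> flip i y \<in> A}) \<le> card (nabla A B)"
proof -
  define T where "T = Sigma B (\<lambda>y. {i. i < length y \<and> flip i y \<in> A})"
  have "(\<Sum>y\<in>B. card {i. i < length y \<and> flip i y \<in> A}) = card T"
    unfolding T_def using assms by simp
  also have "\<dots> \<le> card (nabla A B)"
  proof (rule card_inj_on_le)
    show "inj_on (\<lambda>(y, i). (flip i y, y)) T"
      unfolding T_def by (rule inj_onI) (auto dest: flip_inj)
    show "(\<lambda>(y, i). (flip i y, y)) ` T \<subseteq> nabla A B"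
      unfolding T_def nabla_def by (auto intro: hadj_flip)
    show "finite (nabla A B)"
      by (rule finite_subset[of _ "A \<times> B"]) (auto simp: nabla_def assms)
  qed
  finally show ?thesis .
qed

lemma out_degree_eq_card_flips_into:
  assumes "A \<union> S = cube n" "A \<inter> S = {}" "y \<in> cube n"
  shows "out_degree S y = card {i. i < length y \<and> flip i y \<in> A}"
proof -
  have "flip i y \<in> A \<union> S" for i
    using assms unfolding cube_def by auto
  then show ?thesis
    unfolding out_degree_def using assms(2) by (metis disjoint_iff UnE)
qed

theorem corollary1p5:
  fixes n :: nat and A B W :: "bool list set"
  assumes "n \<ge> 1"
    and "A \<union> B \<union> W = cube n"
    and "A \<inter> B = {}" and "A \<inter> W = {}" and "B \<inter> W = {}"
    and "card A = 2 ^ (n - 1)"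
  shows "real (card (nabla A B)) + real n powr (log 2 (3/2)) * real (card W) \<ge> 2 ^ (n - 1)"
proof -
  define S where "S = B \<union> W"
  have cube: "A \<union> S = cube n" "A \<inter> S = {}" "S \<subseteq> cube n"
    using assms(2-5) unfolding S_def by auto
  have fin: "finite A" "finite B" "finite W"
    using assms(2) finite_cube by (metis finite_Un)+
  obtain m where m: "n = Suc m" using assms(1) by (cases n) auto
  have "card A + card S = 2 ^ n"
    using cube fin card_cube[of n] unfolding S_def by (metis card_Un_disjoint finite_Un)
  then have "card S = 2 ^ m" using assms(6) m by simp
  then have "2 ^ (n - 1) \<le> (\<Sum>x\<in>S. real (out_degree S x) powr \<beta>)"
    using sum_out_degree_powr_\<beta>_ge[OF cube(3)] iso_profile_half[of "2 ^ m"] m by simp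
  also have "\<dots> = (\<Sum>x\<in>B. real (out_degree S x) powr \<beta>) + (\<Sum>x\<in>W. real (out_degree S x) powr \<beta>)"
    unfolding S_def using fin(2,3) assms(5) by (rule sum.union_disjoint)
  also have "(\<Sum>x\<in>B. real (out_degree S x) powr \<beta>) \<le> real (card (nabla A B))"
  proof -
    have "(\<Sum>x\<in>B. real (out_degree S x) powr \<beta>) \<le> (\<Sum>x\<in>B. real (out_degree S x))"
      by (intro sum_mono nat_powr_\<beta>_le)
    also have "\<dots> = real (\<Sum>y\<in>B. card {i. i < length y \<and> flip i y \<in> A})"
      unfolding of_nat_sum using out_degree_eq_card_flips_into[OF cube(1,2)] assms(2)
      by (intro sum.cong) auto
    also have "\<dots> \<le> real (card (nabla A B))"
      using sum_card_flips_le_card_nabla[OF fin(1,2)] by (rule of_nat_mono)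
    finally show ?thesis .
  qed
  also have "(\<Sum>x\<in>W. real (out_degree S x) powr \<beta>) \<le> real (card W) * real n powr \<beta>"
  proof -
    have "real (out_degree S x) powr \<beta> \<le> real n powr \<beta>" if "x \<in> W" for x
      using that assms(2) out_degree_le_length[of S x] \<beta>_pos unfolding cube_def
      by (intro powr_mono2) auto
    then show ?thesis using sum_bounded_above[of W _ "real n powr \<beta>"] by simp
  qed
  finally show ?thesis unfolding \<beta>_def by (simp add: mult.commute)
qed

end
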